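(* Let $G$ be a weighted planar graph with strictly positive edge weights in which shortest paths are unique. Let $R_{i+1}$ be a region (edge-induced subgraph) of $G$ whose boundary vertex set $\partial R_{i+1}$ lies on a single simple cycle $C$ bounding a face (hole) of $R_{i+1}$, and let $R_{i+1}^{\operatorname{out}}$ denote the subgraph of $G$ induced by the edges lying on the side of $C$ not containing $R_{i+1}$, together with $C$. Let $R_i$ be a subregion of $R_{i+1}$ (a region of the next-finer level of the hierarchical division whose edges are contained in $R_{i+1}$), let $q\in\partial R_i$, and let $v$ be a vertex with $v\notin R_{i+1}$. Consider the additively weighted Voronoi diagram of $R_{i+1}^{\operatorname{out}}$ with site set $\partial R_{i+1}$ and weights $\omega(s)=\operatorname{dist}_G(q,s)$. Then $v\in\operatorname{Vor}(s)$ if and only if $s$ is the last vertex of $\partial R_{i+1}$ on the shortest path from $q$ to $v$ in $G$; moreover, for this $s$, $d^\omega(s,v)=\operatorname{dist}_G(q,v)$.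
   Context: For a region $R$ of a division of $G$ (a collection of edge-induced subgraphs whose union is $G$), $\partial R$ is the set of vertices of $R$ that belong to more than one region. Additively weighted Voronoi diagram: given a graph $H$, a set $S$ of sites on a face of $H$, and weights $\omega:S\to\mathbb{R}_{\ge 0}$, define $d^\omega(s,v)=\omega(s)+\operatorname{dist}_H(s,v)$ for $s\in S$, $v\in V(H)$, and $\operatorname{Vor}(s)=\{v\in V(H) : \forall s'\neq s,\ (d^\omega(s,v),-\omega(s)) < (d^\omega(s',v),-\omega(s'))\}$, where pairs are compared lexicographically (i.e., ties in distance are broken in favor of larger $\omega$). Here $H=R_{i+1}^{\operatorname{out}}$, so distances in $d^\omega$ are measured in $R_{i+1}^{\operatorname{out}}$. *)

theory Defs
  imports "HOL-Analysis.Analysis"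
begin

text \<open>Undirected weighted graphs: a graph is given by its edge set E, each edge a
2-element vertex set; the vertex set is the union of E.  Weights are w :: 'v set => real.\<close>

definition ugraph :: "'v set set \<Rightarrow> bool" where
  "ugraph E \<longleftrightarrow> finite E \<and> (\<forall>e\<in>E. \<exists>a b. a \<noteq> b \<and> e = {a, b})"

definition walk :: "'v set set \<Rightarrow> 'v list \<Rightarrow> bool" where
  "walk E xs \<longleftrightarrow> xs \<noteq> [] \<and> (\<forall>i < length xs - 1. {xs ! i, xs ! Suc i} \<in> E)"

definition walk_len :: "('v set \<Rightarrow> real) \<Rightarrow> 'v list \<Rightarrow> real" where
  "walk_len w xs = (\<Sum>i < length xs - 1. w {xs ! i, xs ! Suc i})"

definition wdist :: "'v set set \<Rightarrow> ('v set \<Rightarrow> real) \<Rightarrow> 'v \<Rightarrow> 'v \<Rightarrow> ereal" where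
  "wdist E w x y = (INF xs \<in> {xs. walk E xs \<and> hd xs = x \<and> last xs = y}. ereal (walk_len w xs))"

definition shortest_path :: "'v set set \<Rightarrow> ('v set \<Rightarrow> real) \<Rightarrow> 'v \<Rightarrow> 'v \<Rightarrow> 'v list \<Rightarrow> bool" where
  "shortest_path E w x y P \<longleftrightarrow> walk E P \<and> distinct P \<and> hd P = x \<and> last P = y
      \<and> ereal (walk_len w P) = wdist E w x y"

definition unique_shortest_paths :: "'v set set \<Rightarrow> ('v set \<Rightarrow> real) \<Rightarrow> bool" where
  "unique_shortest_paths E w \<longleftrightarrow>
     (\<forall>x y P P'. shortest_path E w x y P \<and> shortest_path E w x y P' \<longrightarrow> P = P')"

definition gconnected :: "'v set set \<Rightarrow> bool" where
  "gconnected E \<longleftrightarrow> (\<forall>x\<in>\<Union>E. \<forall>y\<in>\<Union>E. \<exists>xs. walk E xs \<and> hd xs = x \<and> last xs = y)"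

definition division :: "'v set set \<Rightarrow> 'v set set set \<Rightarrow> bool" where
  "division E D \<longleftrightarrow> (\<forall>R\<in>D. R \<subseteq> E) \<and> \<Union>D = E"

definition bnd :: "'v set set set \<Rightarrow> 'v set set \<Rightarrow> 'v set" where
  "bnd D R = {x \<in> \<Union>R. \<exists>R'\<in>D. R' \<noteq> R \<and> x \<in> \<Union>R'}"

definition plane_embedding :: "'v set set \<Rightarrow> ('v \<Rightarrow> complex) \<Rightarrow> ('v set \<Rightarrow> real \<Rightarrow> complex) \<Rightarrow> bool" where
  "plane_embedding E pos \<gamma> \<longleftrightarrow>
     inj_on pos (\<Union>E) \<and>
     (\<forall>e\<in>E. arc (\<gamma> e) \<and> {pathstart (\<gamma> e), pathfinish (\<gamma> e)} = pos ` e) \<and>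
     (\<forall>e\<in>E. path_image (\<gamma> e) \<inter> pos ` (\<Union>E) = pos ` e) \<and>
     (\<forall>e\<in>E. \<forall>e'\<in>E. e \<noteq> e' \<longrightarrow> path_image (\<gamma> e) \<inter> path_image (\<gamma> e') \<subseteq> pos ` (e \<inter> e'))"

definition img :: "('v set \<Rightarrow> real \<Rightarrow> complex) \<Rightarrow> 'v set set \<Rightarrow> complex set" where
  "img \<gamma> R = (\<Union>e\<in>R. path_image (\<gamma> e))"

definition cyc_edges :: "'v list \<Rightarrow> 'v set set" where
  "cyc_edges cs = {{cs ! i, cs ! ((i + 1) mod length cs)} | i. i < length cs}"

definition simple_cycle :: "'v set set \<Rightarrow> 'v list \<Rightarrow> bool" where
  "simple_cycle E cs \<longleftrightarrow> distinct cs \<and> length cs \<ge> 3 \<and> cyc_edges cs \<subseteq> E"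

definition face_bounded_by :: "('v set \<Rightarrow> real \<Rightarrow> complex) \<Rightarrow> 'v set set \<Rightarrow> 'v list \<Rightarrow> complex set \<Rightarrow> bool" where
  "face_bounded_by \<gamma> R cs F \<longleftrightarrow> F \<in> components (- img \<gamma> R) \<and> frontier F = img \<gamma> (cyc_edges cs)"

text \<open>R^out: edges of G on the side of C not containing R (the face F), together with C.\<close>
definition rout :: "'v set set \<Rightarrow> ('v set \<Rightarrow> real \<Rightarrow> complex) \<Rightarrow> complex set \<Rightarrow> 'v set set" where
  "rout E \<gamma> F = {e \<in> E. path_image (\<gamma> e) \<subseteq> closure F}"

definition dw :: "'v set set \<Rightarrow> ('v set \<Rightarrow> real) \<Rightarrow> ('v \<Rightarrow> ereal) \<Rightarrow> 'v \<Rightarrow> 'v \<Rightarrow> ereal" where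
  "dw H w \<omega> s x = \<omega> s + wdist H w s x"

definition lexless :: "ereal \<times> ereal \<Rightarrow> ereal \<times> ereal \<Rightarrow> bool" where
  "lexless p p' \<longleftrightarrow> fst p < fst p' \<or> (fst p = fst p' \<and> snd p < snd p')"

definition Vor :: "'v set set \<Rightarrow> ('v set \<Rightarrow> real) \<Rightarrow> 'v set \<Rightarrow> ('v \<Rightarrow> ereal) \<Rightarrow> 'v \<Rightarrow> 'v set" where
  "Vor H w S \<omega> s = {x \<in> \<Union>H. \<forall>s'\<in>S. s' \<noteq> s \<longrightarrow>
       lexless (dw H w \<omega> s x, - \<omega> s) (dw H w \<omega> s' x, - \<omega> s')}"

end

theory Submission
  imports Defs
begin

text \<open>Let P be the unique shortest path from q to v and s its last vertex on the boundary of
R_{i+1}. After s, P meets no boundary vertex and ends outside R_{i+1}, so it never re-enters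
R_{i+1}; the open arc of each of its edges then avoids the drawing of R_{i+1} and touches the
face F, so the whole suffix lies in R_{i+1}^out. Subpaths of shortest paths are shortest, hence
d^w(s, v) = dist(q, v). For any other site s', d^w(s', v) is the length of some q-v walk through
s', so it is at least dist(q, v); in case of equality that walk is a shortest path, hence equal to
P, so s' precedes s on P and has strictly smaller weight dist(q, s'), losing the tie-break.\<close>

lemma walk_single [simp]: "walk E [x]"
  by (simp add: walk_def)

lemma walk_Nil [simp]: "\<not> walk E []"
  by (simp add: walk_def)

lemma walk_len_single [simp]: "walk_len w [x] = 0"
  by (simp add: walk_len_def)

lemma walk_Cons2 [simp]: "walk E (x # y # xs) \<longleftrightarrow> {x, y} \<in> E \<and> walk E (y # xs)"
  unfolding walk_def by (auto simp: less_Suc_eq_0_disj)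

lemma walk_len_Cons2 [simp]: "walk_len w (x # y # xs) = w {x, y} + walk_len w (y # xs)"
  unfolding walk_len_def by (simp del: sum.lessThan_Suc add: sum.lessThan_Suc_shift)

lemma walk_append: "walk E (xs @ y # ys) \<longleftrightarrow> walk E (xs @ [y]) \<and> walk E (y # ys)"
proof (induction xs)
  case (Cons a xs)
  then show ?case by (cases xs) auto
qed simp

lemma walk_len_append: "walk_len w (xs @ y # ys) = walk_len w (xs @ [y]) + walk_len w (y # ys)"
proof (induction xs)
  case (Cons a xs)
  then show ?case by (cases xs) auto
qed simp

lemma walk_mono: "walk E xs \<Longrightarrow> E \<subseteq> E' \<Longrightarrow> walk E' xs"
  unfolding walk_def by blast

lemma walk_set: "walk E xs \<Longrightarrow> set xs \<subseteq> insert (hd xs) (\<Union>E)"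
  by (induction xs rule: induct_list012) auto

lemma walk_len_nonneg: "\<forall>e\<in>E. w e > 0 \<Longrightarrow> walk E xs \<Longrightarrow> walk_len w xs \<ge> 0"
proof (induction xs rule: induct_list012)
  case (3 x y zs)
  then show ?case by (fastforce intro: add_nonneg_nonneg less_imp_le)
qed auto

lemma walk_len_pos: "\<forall>e\<in>E. w e > 0 \<Longrightarrow> walk E (x # y # zs) \<Longrightarrow> walk_len w (x # y # zs) > 0"
  using walk_len_nonneg[of E w "y # zs"] by (auto intro: add_pos_nonneg)

lemma walk_join:
  assumes "walk E W1" "walk E W2" "last W1 = hd W2"
  shows "walk E (butlast W1 @ W2)"
    and "walk_len w (butlast W1 @ W2) = walk_len w W1 + walk_len w W2"
    and "hd (butlast W1 @ W2) = hd W1"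
    and "last (butlast W1 @ W2) = last W2"
proof -
  obtain y ys where W2: "W2 = y # ys"
    using assms(2) by (cases W2) auto
  have W1: "W1 = butlast W1 @ [y]"
    using assms(1,3) W2 by (metis append_butlast_last_id list.sel(1) walk_Nil)
  show "walk E (butlast W1 @ W2)"
    using assms(1,2) W1 W2 walk_append[of E "butlast W1" y ys] by simp
  show "walk_len w (butlast W1 @ W2) = walk_len w W1 + walk_len w W2"
    using W1 W2 walk_len_append[of w "butlast W1" y ys] by simp
  show "hd (butlast W1 @ W2) = hd W1"
    using W1 W2 by (cases "butlast W1") (auto simp: hd_append)
  show "last (butlast W1 @ W2) = last W2"
    using W2 by simp
qed

lemma walk_shortcut:
  assumes pos: "\<forall>e\<in>E. w e > 0" and W: "walk E W" and "\<not> distinct W"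
  obtains W' where "walk E W'" "hd W' = hd W" "last W' = last W"
    "walk_len w W' < walk_len w W" "length W' < length W"
proof -
  obtain a b c u where W_eq: "W = a @ [u] @ b @ [u] @ c"
    using not_distinct_decomp[OF \<open>\<not> distinct W\<close>] by blast
  have "walk E (a @ [u])" and loop: "walk E ((u # b) @ [u])" and "walk E (u # c)"
    using W W_eq walk_append[of E a u "b @ u # c"] walk_append[of E "u # b" u c] by auto
  then have "walk E (a @ u # c)"
    using walk_append[of E a u c] by blast
  moreover have "walk_len w W = walk_len w (a @ u # c) + walk_len w ((u # b) @ [u])"
    using W_eq walk_len_append[of w a u "b @ u # c"] walk_len_append[of w "u # b" u c]
      walk_len_append[of w a u c] by simp
  moreover have "walk_len w ((u # b) @ [u]) > 0"
    using walk_len_pos[OF pos, of u "hd (b @ [u])" "tl (b @ [u])"] loop by (cases b) auto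
  moreover have "hd (a @ u # c) = hd W" "last (a @ u # c) = last W"
    using W_eq by (cases a; simp)+
  ultimately show ?thesis
    using that W_eq by fastforce
qed

lemma walk_le_distinct_walk:
  assumes "\<forall>e\<in>E. w e > 0" and "walk E W"
  obtains P where "walk E P" "distinct P" "hd P = hd W" "last P = last W"
    "walk_len w P \<le> walk_len w W"
  using assms(2)
proof (induction W arbitrary: thesis rule: length_induct)
  case (1 W)
  show ?case
  proof (cases "distinct W")
    case True
    then show ?thesis using "1.prems" by blast
  next
    case False
    then obtain W' where "walk E W'" "hd W' = hd W" "last W' = last W"
      "walk_len w W' < walk_len w W" "length W' < length W"
      using walk_shortcut[OF assms(1) "1.prems"(2)] by blast
    then show ?thesis using "1.IH" "1.prems"(1) by (metis less_imp_le order_trans)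
  qed
qed

lemma finite_distinct_walks:
  assumes "finite (\<Union>E)"
  shows "finite {P. walk E P \<and> distinct P \<and> hd P = x}"
proof (rule finite_subset)
  let ?V = "insert x (\<Union>E)"
  show "{P. walk E P \<and> distinct P \<and> hd P = x} \<subseteq> {P. set P \<subseteq> ?V \<and> length P \<le> card ?V}"
  proof
    fix P assume "P \<in> {P. walk E P \<and> distinct P \<and> hd P = x}"
    then have P: "walk E P" "distinct P" "hd P = x" by simp_all
    then have "set P \<subseteq> ?V" using walk_set by blast
    moreover have "length P \<le> card ?V"
      using P(2) calculation assms by (metis card_mono distinct_card finite_insert)
    ultimately show "P \<in> {P. set P \<subseteq> ?V \<and> length P \<le> card ?V}" by blast
  qed
  show "finite {P. set P \<subseteq> ?V \<and> length P \<le> card ?V}"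
    using assms by (simp add: finite_lists_length_le)
qed

lemma wdist_le: "walk E W \<Longrightarrow> hd W = x \<Longrightarrow> last W = y \<Longrightarrow> wdist E w x y \<le> ereal (walk_len w W)"
  unfolding wdist_def by (rule INF_lower) auto

lemma wdist_geI:
  "(\<And>W. walk E W \<Longrightarrow> hd W = x \<Longrightarrow> last W = y \<Longrightarrow> c \<le> walk_len w W) \<Longrightarrow> ereal c \<le> wdist E w x y"
  unfolding wdist_def by (rule INF_greatest) auto

lemma wdist_eq_infinity: "\<nexists>W. walk E W \<and> hd W = x \<and> last W = y \<Longrightarrow> wdist E w x y = \<infinity>"
proof -
  assume "\<nexists>W. walk E W \<and> hd W = x \<and> last W = y"
  then have no_walks: "{W. walk E W \<and> hd W = x \<and> last W = y} = {}" by blast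
  show ?thesis unfolding wdist_def no_walks by (simp add: top_ereal_def)
qed

lemma wdist_mono: "H \<subseteq> E \<Longrightarrow> wdist E w x y \<le> wdist H w x y"
  unfolding wdist_def by (rule INF_superset_mono) (auto intro: walk_mono)

definition shortest_walk :: "'v set set \<Rightarrow> ('v set \<Rightarrow> real) \<Rightarrow> 'v list \<Rightarrow> bool" where
  "shortest_walk E w P \<longleftrightarrow> walk E P \<and> ereal (walk_len w P) = wdist E w (hd P) (last P)"

lemma shortest_path_iff_shortest_walk:
  "shortest_path E w x y P \<longleftrightarrow> shortest_walk E w P \<and> distinct P \<and> hd P = x \<and> last P = y"
  unfolding shortest_path_def shortest_walk_def by auto

lemma shortest_walk_split:
  assumes "shortest_walk E w (xs @ y # ys)"
  shows "shortest_walk E w (xs @ [y])" and "shortest_walk E w (y # ys)"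
proof -
  let ?P = "xs @ y # ys"
  have walks: "walk E (xs @ [y])" "walk E (y # ys)"
    using assms walk_append[of E xs y ys] unfolding shortest_walk_def by simp_all
  have len: "walk_len w ?P = walk_len w (xs @ [y]) + walk_len w (y # ys)"
    by (rule walk_len_append)
  have hd: "hd (xs @ [y]) = hd ?P"
    by (cases xs) auto
  have opt: "walk_len w ?P \<le> walk_len w W"
    if "walk E W" "hd W = hd ?P" "last W = last ?P" for W
  proof -
    have "ereal (walk_len w ?P) \<le> ereal (walk_len w W)"
      using assms wdist_le[OF that] unfolding shortest_walk_def by simp
    then show ?thesis by simp
  qed
  have "walk_len w (xs @ [y]) \<le> walk_len w W" if W: "walk E W" "hd W = hd ?P" "last W = y" for W
  proof -
    note join = walk_join[OF W(1) walks(2)]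
    have "walk_len w ?P \<le> walk_len w (butlast W @ y # ys)"
      using join W by (intro opt) auto
    then show ?thesis
      using join(2) W(3) len by simp
  qed
  then have "ereal (walk_len w (xs @ [y])) \<le> wdist E w (hd (xs @ [y])) (last (xs @ [y]))"
    unfolding hd by (intro wdist_geI) auto
  then show "shortest_walk E w (xs @ [y])"
    using walks(1) wdist_le[OF walks(1) refl refl, of w] unfolding shortest_walk_def by (auto intro: antisym)
  have "walk_len w (y # ys) \<le> walk_len w W" if W: "walk E W" "hd W = y" "last W = last ?P" for W
  proof -
    note join = walk_join[OF walks(1) W(1)]
    have "walk_len w ?P \<le> walk_len w (xs @ W)"
      using join W hd by (intro opt) auto
    then show ?thesis
      using join(2) W(2) len by simp
  qed
  then have "ereal (walk_len w (y # ys)) \<le> wdist E w (hd (y # ys)) (last (y # ys))"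
    by (intro wdist_geI) auto
  then show "shortest_walk E w (y # ys)"
    using walks(2) wdist_le[OF walks(2) refl refl, of w] unfolding shortest_walk_def by (auto intro: antisym)
qed

lemma shortest_walk_distinct:
  assumes "\<forall>e\<in>E. w e > 0" and "shortest_walk E w P"
  shows "distinct P"
proof (rule ccontr)
  assume "\<not> distinct P"
  then obtain W where "walk E W" "hd W = hd P" "last W = last P" "walk_len w W < walk_len w P"
    using walk_shortcut assms shortest_walk_def by metis
  then have "ereal (walk_len w P) \<le> ereal (walk_len w W)"
    using wdist_le[of E W "hd P" "last P" w] assms(2) unfolding shortest_walk_def by simp
  then show False
    using \<open>walk_len w W < walk_len w P\<close> by simp
qed

lemma shortest_path_exists:
  assumes fin: "finite (\<Union>E)" and pos: "\<forall>e\<in>E. w e > 0"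
    and W: "walk E W" "hd W = x" "last W = y"
  obtains P where "shortest_path E w x y P"
proof -
  define D where "D = {P. walk E P \<and> distinct P \<and> hd P = x \<and> last P = y}"
  have dominated: "\<exists>P\<in>D. walk_len w P \<le> walk_len w W'"
    if W': "walk E W'" "hd W' = x" "last W' = y" for W'
  proof -
    obtain P where "walk E P" "distinct P" "hd P = hd W'" "last P = last W'"
      "walk_len w P \<le> walk_len w W'"
      using walk_le_distinct_walk[OF pos W'(1)] by blast
    then show ?thesis using W' unfolding D_def by auto
  qed
  have "finite D"
    using finite_distinct_walks[OF fin, of x] by (rule rev_finite_subset) (auto simp: D_def)
  moreover have "D \<noteq> {}"
    using dominated[OF W] by blast
  ultimately have P: "arg_min_on (walk_len w) D \<in> D"
    and min: "\<And>P'. P' \<in> D \<Longrightarrow> walk_len w (arg_min_on (walk_len w) D) \<le> walk_len w P'"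
    by (auto intro: arg_min_if_finite arg_min_least)
  define P where "P = arg_min_on (walk_len w) D"
  have P_walk: "walk E P" "distinct P" "hd P = x" "last P = y"
    using P unfolding D_def P_def by auto
  have "ereal (walk_len w P) \<le> wdist E w x y"
    using dominated min unfolding P_def by (force intro: wdist_geI)
  moreover have "wdist E w x y \<le> ereal (walk_len w P)"
    using wdist_le[OF P_walk(1,3,4)] .
  ultimately show ?thesis
    using that P_walk unfolding shortest_path_def by auto
qed

lemma wdist_less_along_shortest_path:
  assumes pos: "\<forall>e\<in>E. w e > 0"
    and sp: "shortest_path E w q v (P1 @ s # P2)" and "s' \<in> set P1"
  shows "wdist E w q s' < wdist E w q s"
proof -
  obtain X Y where P1: "P1 = X @ s' # Y"
    using split_list \<open>s' \<in> set P1\<close> by metis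
  have "shortest_walk E w ((X @ s' # Y) @ s # P2)" and hd: "hd (X @ [s']) = q"
    using sp P1 by (auto simp: shortest_path_iff_shortest_walk, cases X, auto)
  then have sw: "shortest_walk E w (X @ s' # (Y @ [s]))"
    using shortest_walk_split(1) by fastforce
  have "walk E (s' # Y @ [s])"
    using sw walk_append[of E X s' "Y @ [s]"] unfolding shortest_walk_def by simp
  then have step: "walk_len w (s' # Y @ [s]) > 0"
    using walk_len_pos[OF pos, of s' "hd (Y @ [s])" "tl (Y @ [s])"] by (cases Y) auto
  have "wdist E w q s' = ereal (walk_len w (X @ [s']))"
    using shortest_walk_split(1)[OF sw] hd unfolding shortest_walk_def by simp
  also have "\<dots> < ereal (walk_len w (X @ s' # Y @ [s]))"
    using step walk_len_append[of w X s' "Y @ [s]"] by simp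
  also have "\<dots> = wdist E w q s"
    using sw hd unfolding shortest_walk_def by (cases X) auto
  finally show ?thesis .
qed

lemma Vor_disjoint:
  assumes "x \<in> Vor H w S \<omega> s" "x \<in> Vor H w S \<omega> s'" "s \<in> S" "s' \<in> S"
  shows "s = s'"
  using assms unfolding Vor_def lexless_def by force

lemma dw_last_site_eq:
  assumes HE: "H \<subseteq> E" and sp: "shortest_path E w q v (P1 @ s # P2)" and suffix: "walk H (s # P2)"
  shows "dw H w (wdist E w q) s v = wdist E w q v"
proof -
  have sw: "shortest_walk E w (P1 @ s # P2)" and ends: "hd (P1 @ [s]) = q" "last (s # P2) = v"
    using sp by (auto simp: shortest_path_iff_shortest_walk, cases P1, auto)
  have "wdist E w q s = ereal (walk_len w (P1 @ [s]))"
    using shortest_walk_split(1)[OF sw] ends unfolding shortest_walk_def by simp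
  moreover have "wdist H w s v = ereal (walk_len w (s # P2))"
  proof (rule antisym)
    show "wdist H w s v \<le> ereal (walk_len w (s # P2))"
      using wdist_le[OF suffix _ ends(2)] by simp
    have "ereal (walk_len w (s # P2)) = wdist E w s v"
      using shortest_walk_split(2)[OF sw] ends unfolding shortest_walk_def by simp
    also have "\<dots> \<le> wdist H w s v"
      using wdist_mono[OF HE] .
    finally show "ereal (walk_len w (s # P2)) \<le> wdist H w s v" .
  qed
  moreover have "wdist E w q v = ereal (walk_len w (P1 @ s # P2))"
    using sp unfolding shortest_path_def by simp
  ultimately show ?thesis
    unfolding dw_def by (simp add: walk_len_append[of w P1 s P2])
qed

lemma optimal_walk_eq_shortest_path:
  assumes pos: "\<forall>e\<in>E. w e > 0" and uniq: "unique_shortest_paths E w"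
    and sp: "shortest_path E w x y P"
    and W: "walk E W" "hd W = x" "last W = y" and len: "walk_len w W = walk_len w P"
  shows "W = P"
proof -
  have "shortest_walk E w W"
    using W len sp unfolding shortest_walk_def shortest_path_def by simp
  then have "shortest_path E w x y W"
    using shortest_walk_distinct[OF pos] W by (simp add: shortest_path_iff_shortest_walk)
  then show ?thesis
    using uniq sp unfolding unique_shortest_paths_def by blast
qed

lemma dw_realized_by_walk:
  assumes fin: "finite (\<Union>E)" and pos: "\<forall>e\<in>E. w e > 0" and HE: "H \<subseteq> E"
    and finite_dw: "dw H w (wdist E w q) s v \<noteq> \<infinity>"
  obtains W where "walk E W" "hd W = q" "last W = v" "s \<in> set W"
    "dw H w (wdist E w q) s v = ereal (walk_len w W)"
proof -
  have finH: "finite (\<Union>H)" and posH: "\<forall>e\<in>H. w e > 0"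
    using HE fin pos by (auto intro: rev_finite_subset)
  have "wdist E w q s \<noteq> \<infinity>" "wdist H w s v \<noteq> \<infinity>"
    using finite_dw unfolding dw_def by auto
  then obtain W1 W2 where W1: "shortest_path E w q s W1" and W2: "shortest_path H w s v W2"
    using shortest_path_exists[OF fin pos] shortest_path_exists[OF finH posH] wdist_eq_infinity
    by metis
  have W1_walk: "walk E W1" "hd W1 = q" "last W1 = s"
    and W2_walk: "walk E W2" "hd W2 = s" "last W2 = v"
    using W1 W2 HE unfolding shortest_path_def by (auto intro: walk_mono)
  then have "last W1 = hd W2"
    by simp
  note join = walk_join[OF W1_walk(1) W2_walk(1) this]
  have "wdist E w q s = ereal (walk_len w W1)" "wdist H w s v = ereal (walk_len w W2)"
    using W1 W2 unfolding shortest_path_def by simp_all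
  then have "dw H w (wdist E w q) s v = ereal (walk_len w (butlast W1 @ W2))"
    unfolding dw_def using join(2)[of w] by simp
  moreover have "s \<in> set (butlast W1 @ W2)"
    using W2_walk by (cases W2) auto
  ultimately show ?thesis
    using that join W1_walk W2_walk by simp
qed

lemma lexless_last_site:
  assumes fin: "finite (\<Union>E)" and pos: "\<forall>e\<in>E. w e > 0" and uniq: "unique_shortest_paths E w"
    and HE: "H \<subseteq> E" and sp: "shortest_path E w q v (P1 @ s # P2)" and suffix: "walk H (s # P2)"
    and other: "s' \<notin> set (s # P2)"
  shows "lexless (dw H w (wdist E w q) s v, - wdist E w q s) (dw H w (wdist E w q) s' v, - wdist E w q s')"
proof -
  let ?P = "P1 @ s # P2"
  have dw_s: "dw H w (wdist E w q) s v = ereal (walk_len w ?P)"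
    using dw_last_site_eq[OF HE sp suffix] sp unfolding shortest_path_def by simp
  show ?thesis
  proof (cases "dw H w (wdist E w q) s' v = \<infinity>")
    case True
    then show ?thesis
      unfolding lexless_def dw_s by simp
  next
    case False
    then obtain W where W: "walk E W" "hd W = q" "last W = v" "s' \<in> set W"
      and dw_s': "dw H w (wdist E w q) s' v = ereal (walk_len w W)"
      using dw_realized_by_walk[OF fin pos HE] by blast
    have "ereal (walk_len w ?P) \<le> ereal (walk_len w W)"
      using sp wdist_le[OF W(1-3)] unfolding shortest_path_def by simp
    then consider "walk_len w ?P < walk_len w W" | "walk_len w W = walk_len w ?P"
      by fastforce
    then show ?thesis
    proof cases
      case 1
      then show ?thesis
        unfolding lexless_def dw_s dw_s' by simp
    next
      case 2
      then have "W = ?P"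
        using optimal_walk_eq_shortest_path[OF pos uniq sp W(1-3)] by blast
      then have "s' \<in> set P1"
        using W(4) other by auto
      then have "wdist E w q s' < wdist E w q s"
        by (rule wdist_less_along_shortest_path[OF pos sp])
      then show ?thesis
        unfolding lexless_def dw_s dw_s' 2 by simp
    qed
  qed
qed

lemma last_site_in_Vor:
  assumes "finite (\<Union>E)" "\<forall>e\<in>E. w e > 0" "unique_shortest_paths E w"
    and "H \<subseteq> E" "shortest_path E w q v (P1 @ s # P2)" "walk H (s # P2)"
    and "v \<in> \<Union>H" "set P2 \<inter> S = {}"
  shows "v \<in> Vor H w S (wdist E w q) s"
  using lexless_last_site[OF assms(1-6)] assms(7,8) unfolding Vor_def by auto

lemma ugraph_finite_vertices: "ugraph E \<Longrightarrow> finite (\<Union>E)"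
  unfolding ugraph_def by (metis finite.emptyI finite_Union finite_insert)

lemma walk_hits_bnd:
  assumes D: "division E D" "R \<in> D"
  shows "walk E xs \<Longrightarrow> hd xs \<in> \<Union>R \<Longrightarrow> last xs \<notin> \<Union>R \<Longrightarrow> \<exists>x\<in>set xs. x \<in> bnd D R"
proof (induction xs rule: induct_list012)
  case (3 x y zs)
  show ?case
  proof (cases "x \<in> bnd D R")
    case False
    obtain R' where "R' \<in> D" "{x, y} \<in> R'"
      using D "3.prems"(1) unfolding division_def by auto
    then have "R' = R"
      using False "3.prems"(2) unfolding bnd_def by auto
    then have "y \<in> \<Union>R"
      using \<open>{x, y} \<in> R'\<close> by blast
    then show ?thesis
      using "3.IH"(2) "3.prems" by auto
  qed simp
qed auto

lemma walk_split_last_bnd: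
  assumes "division E D" "R \<in> D" "walk E xs" "hd xs \<in> \<Union>R" "last xs \<notin> \<Union>R"
  obtains ys z zs where "xs = ys @ z # zs" "z \<in> bnd D R" "set zs \<inter> bnd D R = {}"
proof -
  have "\<exists>x\<in>set xs. x \<in> bnd D R"
    using walk_hits_bnd[OF assms] .
  then show ?thesis
    using that by (elim split_list_last_propE) blast
qed

lemma walk_tail_outside_region:
  assumes D: "division E D" "R \<in> D"
    and "walk E (x # xs)" "set xs \<inter> bnd D R = {}" "last (x # xs) \<notin> \<Union>R"
  shows "set xs \<inter> \<Union>R = {}"
proof (rule ccontr)
  assume "set xs \<inter> \<Union>R \<noteq> {}"
  then obtain y a b where xs: "xs = a @ y # b" and y: "y \<in> \<Union>R"
    by (metis disjoint_iff split_list)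
  have "walk E (y # b)"
    using assms(3) walk_append[of E "x # a" y b] xs by simp
  moreover have "last (y # b) = last (x # xs)"
    using xs by simp
  ultimately obtain z where "z \<in> set (y # b)" "z \<in> bnd D R"
    using walk_hits_bnd[OF D, of "y # b"] y assms(5) by auto
  then show False
    using assms(4) xs by auto
qed

lemma closed_img:
  assumes "plane_embedding E pos \<gamma>" "R \<subseteq> E" "finite R"
  shows "closed (img \<gamma> R)"
  unfolding img_def
proof (rule closed_UN[OF assms(3)], rule ballI)
  fix e assume "e \<in> R"
  then have "arc (\<gamma> e)"
    using assms(1,2) unfolding plane_embedding_def by auto
  then show "closed (path_image (\<gamma> e))"
    by (simp add: arc_imp_path closed_path_image)
qed

lemma vertex_in_img_imp_in_region:
  assumes pe: "plane_embedding E pos \<gamma>" and "R \<subseteq> E" "y \<in> \<Union>E" "pos y \<in> img \<gamma> R"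
  shows "y \<in> \<Union>R"
proof -
  obtain e where e: "e \<in> R" "pos y \<in> path_image (\<gamma> e)"
    using assms(4) unfolding img_def by blast
  then have "pos y \<in> pos ` e"
    using pe assms(2,3) unfolding plane_embedding_def by blast
  then obtain z where "z \<in> e" "pos y = pos z"
    by blast
  moreover have "inj_on pos (\<Union>E)"
    using pe unfolding plane_embedding_def by blast
  ultimately have "y = z"
    using e(1) assms(2,3) by (meson UnionI inj_onD subsetD)
  then show ?thesis
    using e(1) \<open>z \<in> e\<close> by blast
qed

lemma open_arc_disjoint_img:
  assumes pe: "plane_embedding E pos \<gamma>" and "e \<in> E" "e \<notin> R" "R \<subseteq> E"
  shows "\<gamma> e ` {0<..<1} \<inter> img \<gamma> R = {}"
proof -
  have arc: "arc (\<gamma> e)" and ends: "{pathstart (\<gamma> e), pathfinish (\<gamma> e)} = pos ` e"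
    using pe \<open>e \<in> E\<close> unfolding plane_embedding_def by auto
  have crossing: "path_image (\<gamma> e) \<inter> path_image (\<gamma> e') \<subseteq> pos ` e" if "e' \<in> R" for e'
  proof -
    have "e' \<in> E" "e' \<noteq> e"
      using that assms(3,4) by auto
    then show ?thesis
      using pe \<open>e \<in> E\<close> unfolding plane_embedding_def by blast
  qed
  have "\<gamma> e t \<notin> img \<gamma> R" if t: "t \<in> {0<..<1}" for t
  proof
    assume "\<gamma> e t \<in> img \<gamma> R"
    then obtain e' where "e' \<in> R" "\<gamma> e t \<in> path_image (\<gamma> e')"
      unfolding img_def by blast
    moreover have "\<gamma> e t \<in> path_image (\<gamma> e)"
      using t unfolding path_image_def by auto
    ultimately have "\<gamma> e t \<in> pos ` e"
      using crossing by blast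
    then have "\<gamma> e t = \<gamma> e 0 \<or> \<gamma> e t = \<gamma> e 1"
      using ends unfolding pathstart_def pathfinish_def by blast
    moreover have "inj_on (\<gamma> e) {0..1}"
      using arc unfolding arc_def by blast
    ultimately have "t = 0 \<or> t = 1"
      using t by (auto dest: inj_onD)
    then show False
      using t by simp
  qed
  then show ?thesis
    by blast
qed

lemma edge_image_subset_closure:
  assumes pe: "plane_embedding E pos \<gamma>" and "e \<in> E" "e \<notin> R" "R \<subseteq> E" "finite R"
    and F: "F \<in> components (- img \<gamma> R)" and "y \<in> e" "pos y \<in> F"
  shows "path_image (\<gamma> e) \<subseteq> closure F"
proof -
  define A where "A = \<gamma> e ` {0<..<1}"
  have arc: "arc (\<gamma> e)" and ends: "{pathstart (\<gamma> e), pathfinish (\<gamma> e)} = pos ` e"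
    using pe \<open>e \<in> E\<close> unfolding plane_embedding_def by auto
  have cont: "continuous_on {0..1} (\<gamma> e)"
    using arc_imp_path[OF arc] unfolding path_def .
  have "A \<subseteq> - img \<gamma> R"
    using open_arc_disjoint_img[OF pe assms(2-4)] unfolding A_def by blast
  moreover have "connected A"
    unfolding A_def by (rule connected_continuous_image) (auto intro: continuous_on_subset[OF cont])
  moreover have closure_A: "path_image (\<gamma> e) \<subseteq> closure A"
  proof -
    have "\<gamma> e ` closure {0<..<1::real} \<subseteq> closure A"
      by (rule image_closure_subset) (use cont in \<open>simp_all add: A_def closure_subset\<close>)
    then show ?thesis
      unfolding path_image_def by simp
  qed
  moreover have "pos y \<in> path_image (\<gamma> e)"
  proof -
    have "pos y \<in> {pathstart (\<gamma> e), pathfinish (\<gamma> e)}"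
      using ends \<open>y \<in> e\<close> by blast
    then show ?thesis
      using pathstart_in_path_image[of "\<gamma> e"] pathfinish_in_path_image[of "\<gamma> e"] by auto
  qed
  moreover have "open F"
    using F closed_img[OF pe assms(4,5)] open_components by blast
  ultimately have "F \<inter> A \<noteq> {}"
    using \<open>pos y \<in> F\<close> open_Int_closure_eq_empty by blast
  then have "A \<subseteq> F"
    using components_maximal[OF F \<open>connected A\<close> \<open>A \<subseteq> - img \<gamma> R\<close>] by blast
  then show ?thesis
    using closure_A closure_mono by blast
qed

lemma vertex_in_face:
  assumes pe: "plane_embedding E pos \<gamma>" and "R \<subseteq> E" "finite R"
    and F: "F \<in> components (- img \<gamma> R)"
    and "e \<in> rout E \<gamma> F" "y \<in> e" "y \<notin> \<Union>R"
  shows "pos y \<in> F"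
proof -
  have "e \<in> E" and "path_image (\<gamma> e) \<subseteq> closure F"
    using assms(5) unfolding rout_def by auto
  moreover have "pos y \<in> path_image (\<gamma> e)"
    using pe \<open>e \<in> E\<close> \<open>y \<in> e\<close> pathstart_in_path_image pathfinish_in_path_image
    unfolding plane_embedding_def by blast
  ultimately have "pos y \<in> closure F"
    by blast
  moreover have "pos y \<notin> img \<gamma> R"
    using vertex_in_img_imp_in_region[OF pe assms(2)] \<open>e \<in> E\<close> assms(6,7) by blast
  then have "pos y \<notin> frontier F"
    using frontier_of_components_closed_complement[OF closed_img[OF pe assms(2,3)] F] by blast
  ultimately show ?thesis
    using interior_subset unfolding frontier_def by blast
qed

lemma walk_outside_region_in_rout:
  assumes pe: "plane_embedding E pos \<gamma>" and R: "R \<subseteq> E" "finite R"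
    and F: "F \<in> components (- img \<gamma> R)"
  shows "walk E (x # xs) \<Longrightarrow> set xs \<inter> \<Union>R = {} \<Longrightarrow> pos (last (x # xs)) \<in> F \<Longrightarrow>
    walk (rout E \<gamma> F) (x # xs)"
proof (induction xs arbitrary: x)
  case (Cons y ys)
  have IH: "walk (rout E \<gamma> F) (y # ys)"
    using Cons by simp
  have "y \<notin> \<Union>R"
    using Cons.prems(2) by auto
  have "pos y \<in> F"
  proof (cases ys)
    case Nil
    then show ?thesis using Cons.prems(3) by simp
  next
    case (Cons z zs)
    then have "{y, z} \<in> rout E \<gamma> F"
      using IH by simp
    then show ?thesis
      using vertex_in_face[OF pe R F _ _ \<open>y \<notin> \<Union>R\<close>] by blast
  qed
  moreover have "{x, y} \<in> E" "{x, y} \<notin> R"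
    using Cons.prems(1) \<open>y \<notin> \<Union>R\<close> by auto
  ultimately have "path_image (\<gamma> {x, y}) \<subseteq> closure F"
    using edge_image_subset_closure[OF pe _ _ R F, of "{x, y}" y] by blast
  then have "{x, y} \<in> rout E \<gamma> F"
    using Cons.prems(1) unfolding rout_def by simp
  then show ?case
    using IH by simp
qed simp

lemma boundary_suffix_in_rout:
  assumes pe: "plane_embedding E pos \<gamma>" and D: "division E D" "R \<in> D" and "finite R"
    and F: "F \<in> components (- img \<gamma> R)"
    and walk: "walk E (s # xs)" and "set xs \<inter> bnd D R = {}"
    and "last (s # xs) \<notin> \<Union>R" "last (s # xs) \<in> \<Union>(rout E \<gamma> F)"
  shows "walk (rout E \<gamma> F) (s # xs)"
proof -
  have R: "R \<subseteq> E" "finite R"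
    using D \<open>finite R\<close> unfolding division_def by auto
  have "pos (last (s # xs)) \<in> F"
    using vertex_in_face[OF pe R F _ _ assms(8)] assms(9) by blast
  moreover have "set xs \<inter> \<Union>R = {}"
    using walk_tail_outside_region[OF D walk] assms(7,8) .
  ultimately show ?thesis
    using walk_outside_region_in_rout[OF pe R F walk] by blast
qed

theorem lemma3:
  fixes E :: "'v set set" and w :: "'v set \<Rightarrow> real"
    and pos :: "'v \<Rightarrow> complex" and \<gamma> :: "'v set \<Rightarrow> real \<Rightarrow> complex"
    and Di Di1 :: "'v set set set" and Ri Ri1 :: "'v set set"
    and C :: "'v list" and F :: "complex set" and q v s :: 'v
  assumes "ugraph E" and "gconnected E"
    and "plane_embedding E pos \<gamma>"
    and "\<forall>e\<in>E. w e > 0"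
    and "unique_shortest_paths E w"
    and "division E Di1" and "division E Di"
    and "\<forall>R\<in>Di. \<exists>R'\<in>Di1. R \<subseteq> R'"
    and "Ri1 \<in> Di1" and "Ri \<in> Di" and "Ri \<subseteq> Ri1"
    and "simple_cycle Ri1 C" and "face_bounded_by \<gamma> Ri1 C F"
    and "bnd Di1 Ri1 \<subseteq> set C"
    and "q \<in> bnd Di Ri"
    and "v \<notin> \<Union>Ri1" and "v \<in> \<Union>(rout E \<gamma> F)"
    and "s \<in> bnd Di1 Ri1"
  shows "(v \<in> Vor (rout E \<gamma> F) w (bnd Di1 Ri1) (wdist E w q) s \<longleftrightarrow>
           (\<exists>P P1 P2. shortest_path E w q v P \<and> P = P1 @ s # P2 \<and> set P2 \<inter> bnd Di1 Ri1 = {}))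
       \<and> ((\<exists>P P1 P2. shortest_path E w q v P \<and> P = P1 @ s # P2 \<and> set P2 \<inter> bnd Di1 Ri1 = {})
           \<longrightarrow> dw (rout E \<gamma> F) w (wdist E w q) s v = wdist E w q v)"
proof -
  define B where "B = bnd Di1 Ri1"
  define H where "H = rout E \<gamma> F"
  have fin: "finite (\<Union>E)"
    using assms(1) by (rule ugraph_finite_vertices)
  have R: "Ri1 \<subseteq> E" "finite Ri1"
    using assms(1,6,9) unfolding division_def ugraph_def by (auto intro: rev_finite_subset)
  have F: "F \<in> components (- img \<gamma> Ri1)"
    using assms(13) unfolding face_bounded_by_def by blast
  have HE: "H \<subseteq> E"
    unfolding H_def rout_def by blast
  have q: "q \<in> \<Union>Ri1" and v: "v \<in> \<Union>H"
    using assms(11,15,17) unfolding bnd_def H_def by auto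
  have cell: "v \<in> Vor H w B (wdist E w q) s' \<and> dw H w (wdist E w q) s' v = wdist E w q v"
    if sp: "shortest_path E w q v (P1 @ s' # P2)" and P2: "set P2 \<inter> B = {}" for P1 s' P2
  proof -
    have "walk E (s' # P2)" "last (s' # P2) = v"
      using sp walk_append[of E P1 s' P2] unfolding shortest_path_def by auto
    then have "walk H (s' # P2)"
      using boundary_suffix_in_rout[OF assms(3,6,9) R(2) F] P2 assms(16,17)
      unfolding B_def H_def by simp
    then show ?thesis
      using last_site_in_Vor[OF fin assms(4,5) HE sp _ v P2] dw_last_site_eq[OF HE sp] by blast
  qed
  obtain W where "walk E W" "hd W = q" "last W = v"
    using assms(2) q v R(1) HE unfolding gconnected_def by blast
  then obtain P where P: "shortest_path E w q v P"
    using shortest_path_exists[OF fin assms(4)] by blast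
  then obtain P1 s0 P2 where P_split: "P = P1 @ s0 # P2" "s0 \<in> B" "set P2 \<inter> B = {}"
    using walk_split_last_bnd[OF assms(6,9)] q assms(16) unfolding shortest_path_def B_def by metis
  have "s = s0" if "v \<in> Vor H w B (wdist E w q) s"
    using Vor_disjoint[OF that] cell[OF P[unfolded P_split] P_split(3)] P_split(2) assms(18)
    unfolding B_def by blast
  then show ?thesis
    using cell P P_split unfolding B_def H_def by blast
qed

end
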